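(* Let $T:X\rightrightarrows X^*$ be a multivalued operator. The following are equivalent: (1) $T$ is pseudomonotone; (2) $S(T,K)\subset S(T^\rho,K)$ for all $K\subset X$; (3) $M(T^\rho,K)\subset M(T,K)$ for all $K\subset X$.
   Context: $X$ is a real Banach space with dual $X^*$ and pairing $\langle x,x^*\rangle=x^*(x)$. A multivalued operator $T:X\rightrightarrows X^*$ is identified with its graph $T\subset X\times X^*$; $T(x)=\{x^*:(x,x^* )\in T\}$. For $K\subset X$: $S(T,K)=\{x\in K: \exists x^*\in T(x),\ \langle y-x,x^*\rangle\ge0\ \forall y\in K\}$ and $M(T,K)=\{x\in K: \langle x-y,y^*\rangle\le0\ \forall (y,y^* )\in T \text{ with } y\in K\}$. For $(x,x^* ),(y,y^* )\in X\times X^*$, write $(x,x^* )\sim_p(y,y^* )$ if either $\min\{\langle x-y,y^*\rangle,\langle y-x,x^*\rangle\}<0$ or $\langle x-y,y^*\rangle=\langle y-x,x^*\rangle=0$. The pseudomonotone polar is $T^\rho=\{(x,x^* ): (x,x^* )\sim_p(y,y^* )\ \forall (y,y^* )\in T\}$. $T$ is pseudomonotone if for all $(x,x^* ),(y,y^* )\in T$, $\langle y-x,x^*\rangle\ge0$ implies $\langle y-x,y^*\rangle\ge0$. *)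

theory Defs
  imports "HOL-Analysis.Analysis"
begin

text \<open>X is a real Banach space (type class banach over the reals); its dual X* is the
space of bounded linear functionals (blinfun into real).
A multivalued operator is identified with its graph.\<close>

type_synonym 'a mop = "('a \<times> ('a \<Rightarrow>\<^sub>L real)) set"

definition pairing :: "'a::real_normed_vector \<Rightarrow> ('a \<Rightarrow>\<^sub>L real) \<Rightarrow> real" where
  "pairing x xs = blinfun_apply xs x"

definition Sol :: "'a::real_normed_vector mop \<Rightarrow> 'a set \<Rightarrow> 'a set" where
  "Sol T K = {x \<in> K. \<exists>xs. (x, xs) \<in> T \<and> (\<forall>y\<in>K. pairing (y - x) xs \<ge> 0)}"

definition Minty :: "'a::real_normed_vector mop \<Rightarrow> 'a set \<Rightarrow> 'a set" where
  "Minty T K = {x \<in> K. \<forall>y ys. (y, ys) \<in> T \<and> y \<in> K \<longrightarrow> pairing (x - y) ys \<le> 0}"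

definition sim_p :: "('a::real_normed_vector \<times> ('a \<Rightarrow>\<^sub>L real)) \<Rightarrow> ('a \<times> ('a \<Rightarrow>\<^sub>L real)) \<Rightarrow> bool" where
  "sim_p p q = (let (x, xs) = p; (y, ys) = q in
     min (pairing (x - y) ys) (pairing (y - x) xs) < 0 \<or>
     (pairing (x - y) ys = 0 \<and> pairing (y - x) xs = 0))"

definition pm_polar :: "'a::real_normed_vector mop \<Rightarrow> 'a mop" where
  "pm_polar T = {p. \<forall>q\<in>T. sim_p p q}"

definition pseudomonotone :: "'a::real_normed_vector mop \<Rightarrow> bool" where
  "pseudomonotone T = (\<forall>x xs y ys. (x, xs) \<in> T \<and> (y, ys) \<in> T \<longrightarrow>
      pairing (y - x) xs \<ge> 0 \<longrightarrow> pairing (y - x) ys \<ge> 0)"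

end

theory Submission
  imports Defs
begin

text \<open>The relation \<open>\<sim>\<^sub>p\<close> between two points of the graph says precisely that the pseudomonotonicity
  implication holds for the pair in both orders. Hence \<open>T\<close> is pseudomonotone iff \<open>T \<subseteq> T\<^sup>\<rho>\<close>, which gives
  (1) \<Rightarrow> (2), (3) by monotonicity of \<open>S\<close> and antitonicity of \<open>M\<close> in the operator. Conversely, testing
  (2) or (3) on the two-point set \<open>K = {x, y}\<close> recovers the pseudomonotonicity implication for
  \<open>(x, x\<^sup>*), (y, y\<^sup>*) \<in> T\<close>.\<close>

lemma pairing_zero_left [simp]: "pairing 0 xs = 0"
  by (simp add: pairing_def blinfun.zero_right)

lemma pairing_minus_commute: "pairing (x - y) xs = - pairing (y - x) xs"
  by (metis minus_diff_eq pairing_def blinfun.minus_right)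

lemma sim_p_iff:
  "sim_p (x, xs) (y, ys) \<longleftrightarrow>
     (0 \<le> pairing (y - x) xs \<longrightarrow> 0 \<le> pairing (y - x) ys) \<and>
     (0 \<le> pairing (x - y) ys \<longrightarrow> 0 \<le> pairing (x - y) xs)"
  using pairing_minus_commute[of x y ys] pairing_minus_commute[of x y xs]
  by (auto simp: sim_p_def min_def)

lemma sim_p_commute: "sim_p p q \<longleftrightarrow> sim_p q p"
  by (cases p, cases q) (auto simp: sim_p_iff)

lemma pm_polarD: "p \<in> pm_polar T \<Longrightarrow> q \<in> T \<Longrightarrow> sim_p p q"
  by (simp add: pm_polar_def)

lemma pseudomonotone_iff_subset_pm_polar: "pseudomonotone T \<longleftrightarrow> T \<subseteq> pm_polar T"
proof -
  have "T \<subseteq> pm_polar T \<longleftrightarrow> (\<forall>(x, xs)\<in>T. \<forall>(y, ys)\<in>T. sim_p (x, xs) (y, ys))"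
    by (auto simp: pm_polar_def)
  then show ?thesis
    unfolding pseudomonotone_def sim_p_iff by fast
qed

lemma Sol_mono: "T \<subseteq> T' \<Longrightarrow> Sol T K \<subseteq> Sol T' K"
  unfolding Sol_def by blast

lemma Minty_antimono: "T \<subseteq> T' \<Longrightarrow> Minty T' K \<subseteq> Minty T K"
  unfolding Minty_def by blast

lemma pseudomonotone_if_Sol_subset:
  assumes Sol: "\<And>K. Sol T K \<subseteq> Sol (pm_polar T) K"
  shows "pseudomonotone T"
  unfolding pseudomonotone_def
proof (intro allI impI, elim conjE)
  fix x xs y ys
  assume x: "(x, xs) \<in> T" and y: "(y, ys) \<in> T" and xy: "0 \<le> pairing (y - x) xs"
  have "x \<in> Sol T {x, y}"
    using x xy by (auto simp: Sol_def)
  then have "x \<in> Sol (pm_polar T) {x, y}"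
    using Sol by blast
  then obtain zs where z: "(x, zs) \<in> pm_polar T" "0 \<le> pairing (y - x) zs"
    by (auto simp: Sol_def)
  from pm_polarD[OF z(1) y] z(2) show "0 \<le> pairing (y - x) ys"
    by (simp add: sim_p_iff)
qed

lemma pseudomonotone_if_Minty_subset:
  assumes Minty: "\<And>K. Minty (pm_polar T) K \<subseteq> Minty T K"
  shows "pseudomonotone T"
  unfolding pseudomonotone_def
proof (intro allI impI, elim conjE)
  fix x xs y ys
  assume x: "(x, xs) \<in> T" and y: "(y, ys) \<in> T" and xy: "0 \<le> pairing (y - x) xs"
  have "0 \<le> pairing (y - x) zs" if "(y, zs) \<in> pm_polar T" for zs
    using pm_polarD[OF that x] xy by (simp add: sim_p_commute sim_p_iff)
  then have "x \<in> Minty (pm_polar T) {x, y}"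
    by (auto simp: Minty_def pairing_minus_commute[of x y])
  with Minty have "x \<in> Minty T {x, y}"
    by blast
  with y have "pairing (x - y) ys \<le> 0"
    by (auto simp: Minty_def)
  then show "0 \<le> pairing (y - x) ys"
    by (simp add: pairing_minus_commute[of x y])
qed

theorem mainTheorem18:
  fixes T :: "('a::banach) mop"
  shows "(pseudomonotone T \<longleftrightarrow> (\<forall>K. Sol T K \<subseteq> Sol (pm_polar T) K))
       \<and> (pseudomonotone T \<longleftrightarrow> (\<forall>K. Minty (pm_polar T) K \<subseteq> Minty T K))"
  using pseudomonotone_iff_subset_pm_polar[of T] Sol_mono[of T "pm_polar T"]
    Minty_antimono[of T "pm_polar T"]
    pseudomonotone_if_Sol_subset[of T] pseudomonotone_if_Minty_subset[of T]
  by blast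

end
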